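(* Consider the constrained perfect SIR model described in the context and assume $\gamma/\beta_{\max}+I_{\max}\le1$. The barrier $[\partial\mathcal{M}]_-$ of the MRPI set is constituted by the barrier curve $x^{\bar\beta}=(S,I)$ generated by the input rule $\bar\beta(t)=\beta_{\max}$ if $\lambda_2(t)-\lambda_1(t)>0$, $\bar\beta(t)=\beta_{\min}$ if $\lambda_2(t)-\lambda_1(t)<0$ (arbitrary if $=0$), together with the adjoint equation $\dot\lambda=\begin{pmatrix}\bar\beta I & -\bar\beta I\\ \bar\beta S & -\bar\beta S+\gamma\end{pmatrix}\lambda$, $\lambda(\bar t)=(0,1)^T$, which ends tangentially to $G_0\cap\Pi$ at the point $(\gamma/\beta_{\max},I_{\max})\in G_0\cap\Pi$ at time $\bar t$; moreover there exists $\epsilon>0$ such that $x^{\bar\beta}(t)\in G_-$ for all $t\in]\bar t-\epsilon,\bar t[$.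
   Context: Perfect SIR model: fix $\gamma>0$, $0<\beta_{\min}\le\beta_{\max}$, $I_{\max}\in(0,1]$. State $x=(S,I)\in\mathbb{R}^2$, input a Lebesgue measurable $\beta:[t_0,\infty[\to[\beta_{\min},\beta_{\max}]$, dynamics $\dot S=-\beta SI$, $\dot I=\beta SI-\gamma I$, written $\dot x=f(x,\beta)$. Constraint $g(S,I)=I-I_{\max}$; $G=\{I\le I_{\max}\}$, $G_-=\{I<I_{\max}\}$, $G_0=\{I=I_{\max}\}$, $\Pi=\{(S,I)\in[0,1]^2:S+I\le1\}$. The maximal robust positively invariant (MRPI) set is $\mathcal{M}=\{x_0\in G:$ the solution from $x_0$ at $t_0$ lies in $G$ for all $t\ge t_0$ and all such inputs $\beta\}$ (closed); its barrier is $[\partial\mathcal{M}]_-=\partial\mathcal{M}\cap G_-$. A barrier curve of $\mathcal{M}$ is an integral curve reaching $G_0$ tangentially at time $\bar t$ at $z$, with a nonzero absolutely continuous $\lambda$ solving $\dot\lambda=-(\partial f/\partial x)^T\lambda$, $\lambda(\bar t)=(0,1)^T$, such that $\max_\beta\lambda^Tf(x(t),\beta)=\lambda^Tf(x(t),\bar\beta(t))=0$ a.e. and $\max_\beta L_fg(z,\beta)=L_fg(z,\bar\beta(\bar t))=0$, with $L_fg=Dg\,f$. *)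

theory Defs
  imports "HOL-Analysis.Analysis"
begin

text \<open>Perfect SIR model. States are pairs (S, I) :: real \<times> real.\<close>

definition sir_f :: "real \<Rightarrow> real \<times> real \<Rightarrow> real \<Rightarrow> real \<times> real" where
  "sir_f \<gamma> x b = (- b * fst x * snd x, b * fst x * snd x - \<gamma> * snd x)"

text \<open>Adjoint right-hand side: lambda' = -(df/dx)^T lambda
  = [[b I, -b I], [b S, -b S + gamma]] lambda.\<close>
definition sir_adj :: "real \<Rightarrow> real \<times> real \<Rightarrow> real \<times> real \<Rightarrow> real \<Rightarrow> real \<times> real" where
  "sir_adj \<gamma> x l b =
     (b * snd x * fst l - b * snd x * snd l,
      b * fst x * fst l + (- b * fst x + \<gamma>) * snd l)"

text \<open>Constraint g(S,I) = I - Imax and its Lie derivative L_f g = Dg f.\<close>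
definition sir_g :: "real \<Rightarrow> real \<times> real \<Rightarrow> real" where
  "sir_g Imax x = snd x - Imax"

definition Lfg :: "real \<Rightarrow> real \<times> real \<Rightarrow> real \<Rightarrow> real" where
  "Lfg \<gamma> x b = snd (sir_f \<gamma> x b)"

definition G_set :: "real \<Rightarrow> (real \<times> real) set" where
  "G_set Imax = {x. sir_g Imax x \<le> 0}"

definition G_minus :: "real \<Rightarrow> (real \<times> real) set" where
  "G_minus Imax = {x. sir_g Imax x < 0}"

definition G_zero :: "real \<Rightarrow> (real \<times> real) set" where
  "G_zero Imax = {x. sir_g Imax x = 0}"

definition Pi_set :: "(real \<times> real) set" where
  "Pi_set = {x. 0 \<le> fst x \<and> fst x \<le> 1 \<and> 0 \<le> snd x \<and> snd x \<le> 1 \<and> fst x + snd x \<le> 1}"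

definition admissible_input :: "real \<Rightarrow> real \<Rightarrow> real \<Rightarrow> (real \<Rightarrow> real) \<Rightarrow> bool" where
  "admissible_input bmin bmax t0 \<beta> \<longleftrightarrow>
     \<beta> \<in> borel_measurable lebesgue \<and> (\<forall>t\<ge>t0. \<beta> t \<in> {bmin..bmax})"

text \<open>Caratheodory solution on [t0, T] in integral form
  (equivalently: absolutely continuous, with x' = f(x, beta) a.e.).\<close>
definition sir_solution :: "real \<Rightarrow> (real \<Rightarrow> real) \<Rightarrow> real \<Rightarrow> real \<Rightarrow> (real \<Rightarrow> real \<times> real) \<Rightarrow> bool" where
  "sir_solution \<gamma> \<beta> t0 T x \<longleftrightarrow>
     (\<forall>t\<in>{t0..T}. ((\<lambda>s. sir_f \<gamma> (x s) (\<beta> s)) has_integral (x t - x t0)) {t0..t})"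

definition MRPI :: "real \<Rightarrow> real \<Rightarrow> real \<Rightarrow> real \<Rightarrow> real \<Rightarrow> (real \<times> real) set" where
  "MRPI \<gamma> bmin bmax Imax t0 =
     {x0 \<in> G_set Imax. \<forall>\<beta> T x. admissible_input bmin bmax t0 \<beta> \<and> x t0 = x0 \<and>
        sir_solution \<gamma> \<beta> t0 T x \<longrightarrow> (\<forall>t\<in>{t0..T}. x t \<in> G_set Imax)}"

definition barrier :: "real \<Rightarrow> real \<Rightarrow> real \<Rightarrow> real \<Rightarrow> real \<Rightarrow> (real \<times> real) set" where
  "barrier \<gamma> bmin bmax Imax t0 = frontier (MRPI \<gamma> bmin bmax Imax t0) \<inter> G_minus Imax"

definition barrier_curve ::
  "real \<Rightarrow> real \<Rightarrow> real \<Rightarrow> real \<Rightarrow> real \<Rightarrow> (real \<Rightarrow> real \<times> real) \<Rightarrow> (real \<Rightarrow> real \<times> real)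
     \<Rightarrow> (real \<Rightarrow> real) \<Rightarrow> real \<times> real \<Rightarrow> bool" where
  "barrier_curve \<gamma> bmin bmax Imax tb x l b z \<longleftrightarrow>
     b \<in> borel_measurable lebesgue \<and> (\<forall>t\<le>tb. b t \<in> {bmin..bmax}) \<and>
     (\<forall>s t. s \<le> t \<and> t \<le> tb \<longrightarrow>
        ((\<lambda>\<tau>. sir_f \<gamma> (x \<tau>) (b \<tau>)) has_integral (x t - x s)) {s..t}) \<and>
     (\<forall>s t. s \<le> t \<and> t \<le> tb \<longrightarrow>
        ((\<lambda>\<tau>. sir_adj \<gamma> (x \<tau>) (l \<tau>) (b \<tau>)) has_integral (l t - l s)) {s..t}) \<and>
     x tb = z \<and> z \<in> G_zero Imax \<and>
     l tb = (0, 1) \<and>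
     (AE t in lebesgue. t \<le> tb \<longrightarrow>
        (\<forall>\<beta>\<in>{bmin..bmax}. l t \<bullet> sir_f \<gamma> (x t) \<beta> \<le> 0) \<and>
        l t \<bullet> sir_f \<gamma> (x t) (b t) = 0) \<and>
     (\<forall>\<beta>\<in>{bmin..bmax}. Lfg \<gamma> z \<beta> \<le> 0) \<and> Lfg \<gamma> z (b tb) = 0"

end

theory Submission
  imports Defs
begin

text \<open>Let \<open>c = \<gamma> / bmax\<close> and \<open>P(S, I) = I + \<psi>(S)\<close>, where \<open>\<psi>(S) = S - c ln S - c + c ln c\<close>
  for \<open>S \<ge> c\<close> and \<open>\<psi>(S) = 0\<close> for \<open>S \<le> c\<close>. The function \<open>\<psi>\<close> is \<open>C\<^sup>1\<close>, and along any
  admissible trajectory (on which \<open>I > 0\<close> persists) \<open>P\<close> is nonincreasing: its derivative is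
  \<open>(\<beta>S - \<gamma>) I \<le> 0\<close> for \<open>S \<le> c\<close> and \<open>(c\<beta> - \<gamma>) I \<le> 0\<close> for \<open>S \<ge> c\<close>. Hence every point with
  \<open>I > 0\<close> and \<open>P \<le> Imax\<close> lies in the MRPI set. Conversely, from a point with \<open>P > Imax\<close> the
  \<open>bmax\<close>-trajectory, which keeps \<open>I + S - c ln S\<close> constant, reaches \<open>S = c\<close> with
  \<open>I = P > Imax\<close>. So within \<open>0 < I < Imax\<close> the barrier is the level set \<open>P = Imax\<close>, i.e. the
  \<open>bmax\<close>-trajectory ending at \<open>(c, Imax)\<close>. It exists for all negative times because the flow time
  to the root of \<open>I\<close> on this level set is infinite. Along it the adjoint is \<open>(1 - c/S, 1)\<close>,
  so \<open>\<lambda>\<^sub>2 - \<lambda>\<^sub>1 = c/S > 0\<close>, consistent with the input \<open>bmax\<close>.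

  Solutions are only given in integral form, so monotonicity of \<open>P\<close> (and the exponential lower
  bound on \<open>I\<close>, via \<open>- ln I\<close>) is not obtained by a chain rule: the increment over every short
  interval \<open>[s, t]\<close> is bounded by \<open>C (t - s) + K (t - s)\<^sup>2\<close>, and summing over fine
  subdivisions removes the quadratic term.\<close>

section \<open>Increments and first crossings of real functions\<close>

lemma diff_le_of_uniform_subdivision:
  fixes g :: "real \<Rightarrow> real" and n :: nat
  assumes "a \<le> b" "n > 0"
    and local: "\<And>s t. a \<le> s \<Longrightarrow> s \<le> t \<Longrightarrow> t \<le> b \<Longrightarrow> g t - g s \<le> C * (t - s) + K * (t - s)\<^sup>2"
  shows "g b - g a \<le> C * (b - a) + K * (b - a)\<^sup>2 / n"
proof -
  define p where "p k = a + real k * (b - a) / n" for k :: nat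
  have step: "g (p (Suc k)) - g (p k) \<le> C * ((b - a) / n) + K * ((b - a) / n)\<^sup>2" if "k < n" for k
  proof -
    have width: "p (Suc k) - p k = (b - a) / n"
      using \<open>n > 0\<close> by (simp add: p_def field_simps)
    have "a \<le> p k"
      using \<open>a \<le> b\<close> by (simp add: p_def)
    moreover have "real (Suc k) * (b - a) \<le> real n * (b - a)"
      using \<open>k < n\<close> \<open>a \<le> b\<close> by (intro mult_right_mono) auto
    then have "real (Suc k) * (b - a) / n \<le> b - a"
      using \<open>n > 0\<close> by (simp add: divide_le_eq mult.commute)
    then have "p (Suc k) \<le> b"
      by (simp add: p_def)
    moreover have "0 \<le> (b - a) / n"
      using \<open>a \<le> b\<close> by simp
    then have "p k \<le> p (Suc k)"
      using width by linarith
    ultimately show ?thesis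
      using local[of "p k" "p (Suc k)"] width by simp
  qed
  have "p 0 = a" "p n = b"
    using \<open>n > 0\<close> by (auto simp: p_def)
  then have "g b - g a = (\<Sum>k<n. g (p (Suc k)) - g (p k))"
    using sum_lessThan_telescope[of "\<lambda>k. g (p k)" n] by simp
  also have "\<dots> \<le> (\<Sum>k<n. C * ((b - a) / n) + K * ((b - a) / n)\<^sup>2)"
    using step by (intro sum_mono) auto
  also have "\<dots> = C * (b - a) + K * (b - a)\<^sup>2 / n"
    using \<open>n > 0\<close> by (simp add: field_simps power2_eq_square)
  finally show ?thesis .
qed

lemma diff_le_of_local_quadratic_bound:
  fixes g :: "real \<Rightarrow> real"
  assumes "a \<le> b"
    and local: "\<And>s t. a \<le> s \<Longrightarrow> s \<le> t \<Longrightarrow> t \<le> b \<Longrightarrow> g t - g s \<le> C * (t - s) + K * (t - s)\<^sup>2"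
  shows "g b - g a \<le> C * (b - a)"
proof (rule ccontr)
  assume "\<not> ?thesis"
  then have excess: "g b - g a - C * (b - a) > 0"
    by simp
  obtain n :: nat where "K * (b - a)\<^sup>2 / (g b - g a - C * (b - a)) < n"
    using reals_Archimedean2 by blast
  then have "K * (b - a)\<^sup>2 / (g b - g a - C * (b - a)) < Suc n"
    by simp
  then have "K * (b - a)\<^sup>2 < Suc n * (g b - g a - C * (b - a))"
    using excess by (simp add: divide_less_eq mult.commute)
  then have "K * (b - a)\<^sup>2 / Suc n < g b - g a - C * (b - a)"
    by (simp add: divide_less_eq mult.commute)
  moreover have "g b - g a \<le> C * (b - a) + K * (b - a)\<^sup>2 / Suc n"
    by (rule diff_le_of_uniform_subdivision[OF \<open>a \<le> b\<close> _ local]) simp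
  ultimately show False
    by simp
qed

lemma norm_increment_le:
  fixes x F :: "real \<Rightarrow> 'a::real_normed_vector"
  assumes "s \<le> t" and "(F has_integral (x t - x s)) {s..t}"
    and "\<And>\<tau>. \<tau> \<in> {s..t} \<Longrightarrow> norm (F \<tau>) \<le> M"
  shows "norm (x t - x s) \<le> M * (t - s)"
proof -
  have "0 \<le> M"
    using assms(1) assms(3)[of s] by (meson atLeastAtMost_iff norm_ge_zero order.trans order_refl)
  then show ?thesis
    using has_integral_bound_real[OF _ finite.emptyI assms(2)] assms by simp
qed

lemma increment_le_of_linear_bound:
  fixes x F :: "real \<Rightarrow> 'a::real_inner" and \<Phi> :: "'a \<Rightarrow> real"
  assumes "s \<le> t" and integral: "(F has_integral (x t - x s)) {s..t}"
    and speed: "\<And>\<tau>. \<tau> \<in> {s..t} \<Longrightarrow> norm (F \<tau>) \<le> M"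
    and taylor: "\<Phi> (x t) - \<Phi> (x s) \<le> D \<bullet> (x t - x s) + K * (norm (x t - x s))\<^sup>2"
    and slope: "\<And>\<tau>. \<tau> \<in> {s..t} \<Longrightarrow> D \<bullet> F \<tau> \<le> C + L * (t - s)"
    and "K \<ge> 0"
  shows "\<Phi> (x t) - \<Phi> (x s) \<le> C * (t - s) + (L + K * M\<^sup>2) * (t - s)\<^sup>2"
proof -
  have "((\<lambda>\<tau>. D \<bullet> F \<tau>) has_integral D \<bullet> (x t - x s)) {s..t}"
    using has_integral_linear[OF integral bounded_linear_inner_right[of D]] by (simp add: o_def)
  moreover have "((\<lambda>\<tau>. C + L * (t - s)) has_integral (C + L * (t - s)) * (t - s)) {s..t}"
    using has_integral_const_real[of "C + L * (t - s)" s t] \<open>s \<le> t\<close> by (simp add: mult.commute)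
  ultimately have linear_part: "D \<bullet> (x t - x s) \<le> (C + L * (t - s)) * (t - s)"
    using slope by (rule has_integral_le)
  have "norm (x t - x s) \<le> M * (t - s)"
    by (rule norm_increment_le[OF \<open>s \<le> t\<close> integral speed])
  then have "(norm (x t - x s))\<^sup>2 \<le> (M * (t - s))\<^sup>2"
    by (intro power_mono) auto
  then have "K * (norm (x t - x s))\<^sup>2 \<le> K * (M * (t - s))\<^sup>2"
    using \<open>K \<ge> 0\<close> by (rule mult_left_mono)
  with linear_part taylor show ?thesis
    by (simp add: algebra_simps power2_eq_square)
qed

lemma abs_fst_le_norm: "\<bar>fst v\<bar> \<le> norm (v :: real \<times> real)"
  using norm_fst_le[of "fst v" "snd v"] by simp

lemma abs_snd_le_norm: "\<bar>snd v\<bar> \<le> norm (v :: real \<times> real)"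
  using norm_snd_le[of "snd v" "fst v"] by simp

lemma inner_Pair_real: "(a, b) \<bullet> (v :: real \<times> real) = a * fst v + b * snd v"
  by (cases v) simp

lemma neg_ln_diff_le:
  fixes y w m :: real
  assumes "m \<le> y" "m \<le> w" "0 < m"
  shows "- ln y + ln w \<le> - (y - w) / w + (y - w)\<^sup>2 / m\<^sup>2"
proof -
  have "0 < y" "0 < w"
    using assms by auto
  have "ln w - ln y \<le> (w - y) / y"
    using ln_diff_le[OF \<open>0 < w\<close> \<open>0 < y\<close>] .
  also have "(w - y) / y = - (y - w) / w + (y - w)\<^sup>2 / (w * y)"
    using \<open>0 < y\<close> \<open>0 < w\<close> by (simp add: field_simps power2_eq_square)
  also have "(y - w)\<^sup>2 / (w * y) \<le> (y - w)\<^sup>2 / m\<^sup>2"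
    using assms mult_mono[of m w m y] by (intro divide_left_mono) (auto simp: power2_eq_square)
  finally show ?thesis
    by simp
qed

lemma first_crossing:
  fixes f :: "real \<Rightarrow> real"
  assumes cont: "continuous_on {a..b} f" and "y < f a" and "t \<in> {a..b}" and "f t \<le> y"
  obtains t' where "t' \<in> {a..t}" "f t' = y" "\<And>\<tau>. \<tau> \<in> {a..<t'} \<Longrightarrow> y < f \<tau>"
proof -
  define Z where "Z = {a..t} \<inter> f -` {..y}"
  have cont_t: "continuous_on {a..t} f"
    by (rule continuous_on_subset[OF cont]) (use \<open>t \<in> {a..b}\<close> in auto)
  then have "closed Z"
    unfolding Z_def by (rule continuous_closed_preimage) auto
  moreover have "bounded Z"
    by (rule bounded_subset[of "{a..t}"]) (auto simp: Z_def)
  ultimately have "compact Z"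
    by (simp add: compact_eq_bounded_closed)
  moreover have "t \<in> Z"
    using assms by (simp add: Z_def)
  ultimately obtain t1 where "t1 \<in> Z" and first: "\<And>\<tau>. \<tau> \<in> Z \<Longrightarrow> t1 \<le> \<tau>"
    using compact_attains_inf[of Z] by blast
  then have "a \<le> t1" "t1 \<le> t" "f t1 \<le> y"
    by (simp_all add: Z_def)
  moreover have "continuous_on {a..t1} f"
    by (rule continuous_on_subset[OF cont_t]) (use \<open>t1 \<le> t\<close> in auto)
  ultimately obtain t' where "a \<le> t'" "t' \<le> t1" "f t' = y"
    using IVT2'[of f t1 y a] \<open>y < f a\<close> by auto
  then have "t' \<in> Z"
    using \<open>t1 \<le> t\<close> by (simp add: Z_def)
  then have "t' = t1"
    using first \<open>t' \<le> t1\<close> by force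
  have "y < f \<tau>" if "\<tau> \<in> {a..<t'}" for \<tau>
  proof -
    have "\<tau> \<notin> Z"
      using first[of \<tau>] that \<open>t' = t1\<close> by force
    then show ?thesis
      using that \<open>t' = t1\<close> \<open>t1 \<le> t\<close> by (simp add: Z_def)
  qed
  moreover have "t' \<in> {a..t}"
    using \<open>a \<le> t'\<close> \<open>t' \<le> t1\<close> \<open>t1 \<le> t\<close> by simp
  ultimately show ?thesis
    using that \<open>f t' = y\<close> by blast
qed

lemma pos_of_lower_bound_while_pos:
  fixes f :: "real \<Rightarrow> real"
  assumes cont: "continuous_on {a..b} f" and "0 < f a" and "0 < \<kappa>"
    and bound: "\<And>t. t \<in> {a..b} \<Longrightarrow> (\<And>\<tau>. \<tau> \<in> {a..t} \<Longrightarrow> 0 < f \<tau>) \<Longrightarrow> \<kappa> \<le> f t"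
    and "t \<in> {a..b}"
  shows "0 < f t"
proof (rule ccontr)
  assume "\<not> 0 < f t"
  then have "f t \<le> \<kappa> / 2"
    using \<open>0 < \<kappa>\<close> by simp
  have "\<kappa> \<le> f a"
    by (rule bound) (use \<open>0 < f a\<close> \<open>t \<in> {a..b}\<close> in auto)
  then obtain t' where t': "t' \<in> {a..t}" "f t' = \<kappa> / 2" and above: "\<And>\<tau>. \<tau> \<in> {a..<t'} \<Longrightarrow> \<kappa> / 2 < f \<tau>"
    using first_crossing[OF cont _ \<open>t \<in> {a..b}\<close> \<open>f t \<le> \<kappa> / 2\<close>] \<open>0 < \<kappa>\<close> by auto
  have "0 < f \<tau>" if "\<tau> \<in> {a..t'}" for \<tau>
    using above[of \<tau>] t' that \<open>0 < \<kappa>\<close> by (cases "\<tau> = t'") auto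
  then have "\<kappa> \<le> f t'"
    using bound[of t'] t' \<open>t \<in> {a..b}\<close> by simp
  then show False
    using t' \<open>0 < \<kappa>\<close> by simp
qed

lemma scaled_div_mult_le:
  fixes c w y X :: real
  assumes "0 < c" "c \<le> w" "c \<le> y" "0 \<le> X"
  shows "c * X / (w * y) \<le> X / c"
proof -
  have "c * X / (w * y) \<le> c * X / (c * c)"
    using assms mult_mono[of c w c y] by (intro divide_left_mono) auto
  then show ?thesis
    using assms(1) by simp
qed

section \<open>The Lyapunov function\<close>

definition psi :: "real \<Rightarrow> real \<Rightarrow> real" where
  "psi c S = max S c - c * ln (max S c) - c + c * ln c"

definition psi' :: "real \<Rightarrow> real \<Rightarrow> real" where
  "psi' c S = 1 - c / max S c"

definition sir_lyapunov :: "real \<Rightarrow> real \<times> real \<Rightarrow> real" where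
  "sir_lyapunov c x = snd x + psi c (fst x)"

lemma psi_eq_0: "S \<le> c \<Longrightarrow> psi c S = 0"
  by (simp add: psi_def max_def)

lemma psi_eq: "c \<le> S \<Longrightarrow> psi c S = S - c * ln S - c + c * ln c"
  by (simp add: psi_def max_def)

lemma psi'_eq: "c \<le> S \<Longrightarrow> psi' c S = 1 - c / S"
  by (simp add: psi'_def max_def)

lemma psi_nonneg:
  assumes "c > 0"
  shows "psi c S \<ge> 0"
proof -
  have "ln (max S c) - ln c \<le> (max S c - c) / c"
    using ln_diff_le[of "max S c" c] assms by simp
  then have "c * (ln (max S c) - ln c) \<le> max S c - c"
    using assms by (simp add: field_simps)
  then show ?thesis
    by (simp add: psi_def algebra_simps)
qed

lemma psi_taylor_above:
  assumes "c > 0" "c \<le> y" "c \<le> w"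
  shows "psi c y - psi c w - psi' c w * (y - w) \<le> (y - w)\<^sup>2 / c"
proof -
  have "0 < y" "0 < w"
    using assms by auto
  have "ln w - ln y \<le> (w - y) / y"
    using ln_diff_le[OF \<open>0 < w\<close> \<open>0 < y\<close>] .
  then have "(y - w) / y \<le> ln y - ln w"
    by (simp add: diff_divide_distrib)
  then have "c * ((y - w) / y) \<le> c * (ln y - ln w)"
    using assms(1) by (intro mult_left_mono) auto
  moreover have "psi c y - psi c w - psi' c w * (y - w) = c * (y - w) / w - c * (ln y - ln w)"
    using assms \<open>0 < w\<close> by (simp add: psi_eq psi'_eq field_simps)
  ultimately have "psi c y - psi c w - psi' c w * (y - w) \<le> c * (y - w) / w - c * ((y - w) / y)"
    by linarith
  also have "\<dots> = c * (y - w)\<^sup>2 / (w * y)"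
    using \<open>0 < y\<close> \<open>0 < w\<close> by (simp add: field_simps power2_eq_square)
  also have "\<dots> \<le> (y - w)\<^sup>2 / c"
    using assms by (intro scaled_div_mult_le) auto
  finally show ?thesis .
qed

lemma psi'_le:
  assumes "c > 0" "c \<le> w"
  shows "psi' c w \<le> (w - c) / c"
proof -
  have "psi' c w = (w - c) / w"
    using assms by (simp add: psi'_eq field_simps)
  also have "\<dots> \<le> (w - c) / c"
    using assms by (intro divide_left_mono) auto
  finally show ?thesis .
qed

lemma psi_taylor:
  assumes "c > 0"
  shows "psi c y - psi c w \<le> psi' c w * (y - w) + (y - w)\<^sup>2 / c"
proof (cases "c \<le> y"; cases "c \<le> w")
  assume "c \<le> y" "c \<le> w"
  then show ?thesis
    using psi_taylor_above[OF assms, of y w] by simp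
next
  assume "c \<le> y" "\<not> c \<le> w"
  have "psi c y \<le> (y - c)\<^sup>2 / c"
    using psi_taylor_above[OF assms \<open>c \<le> y\<close> order_refl] psi_eq_0[of c c] psi'_eq[of c c] assms by simp
  also have "\<dots> \<le> (y - w)\<^sup>2 / c"
    using \<open>c \<le> y\<close> \<open>\<not> c \<le> w\<close> assms by (intro divide_right_mono power_mono) auto
  finally show ?thesis
    using \<open>\<not> c \<le> w\<close> assms by (simp add: psi_eq_0 psi'_def max_def)
next
  assume "\<not> c \<le> y" "c \<le> w"
  define d where "d = psi' c w"
  have "- psi c w - d * (c - w) \<le> (c - w)\<^sup>2 / c"
    using psi_taylor_above[OF assms order_refl \<open>c \<le> w\<close>] psi_eq_0[of c c] by (simp add: d_def)
  moreover have "d \<le> (w - c) / c"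
    unfolding d_def by (rule psi'_le[OF assms \<open>c \<le> w\<close>])
  then have "d * (c - y) \<le> (w - c) / c * (c - y)"
    using \<open>\<not> c \<le> y\<close> by (intro mult_right_mono) auto
  moreover have "(w - c) / c * (c - y) + (c - w)\<^sup>2 / c = (w - c) * (w - y) / c"
    using assms by (simp add: field_simps power2_eq_square)
  moreover have "(w - c) * (w - y) \<le> (w - y) * (w - y)"
    using \<open>\<not> c \<le> y\<close> \<open>c \<le> w\<close> by (intro mult_right_mono) auto
  then have "(w - c) * (w - y) \<le> (y - w)\<^sup>2"
    by (simp add: power2_eq_square algebra_simps)
  then have "(w - c) * (w - y) / c \<le> (y - w)\<^sup>2 / c"
    using assms by (simp add: divide_right_mono)
  ultimately have "- psi c w \<le> d * (y - w) + (y - w)\<^sup>2 / c"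
    by (simp add: algebra_simps)
  then show ?thesis
    using \<open>\<not> c \<le> y\<close> by (simp add: psi_eq_0 d_def)
next
  assume "\<not> c \<le> y" "\<not> c \<le> w"
  then show ?thesis
    using assms by (simp add: psi_eq_0 psi'_def max_def)
qed

lemma psi'_lipschitz:
  assumes "c > 0"
  shows "\<bar>psi' c y - psi' c w\<bar> \<le> \<bar>y - w\<bar> / c"
proof -
  define a b where "a = max y c" and "b = max w c"
  have "c \<le> a" "c \<le> b" "\<bar>a - b\<bar> \<le> \<bar>y - w\<bar>"
    by (auto simp: a_def b_def max_def)
  have "psi' c y - psi' c w = c * (a - b) / (b * a)"
    using assms \<open>c \<le> a\<close> \<open>c \<le> b\<close> by (simp add: psi'_def a_def[symmetric] b_def[symmetric] field_simps)
  then have "\<bar>psi' c y - psi' c w\<bar> = c * \<bar>a - b\<bar> / (b * a)"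
    using assms \<open>c \<le> a\<close> \<open>c \<le> b\<close> by (simp add: abs_mult abs_divide)
  also have "\<dots> \<le> \<bar>a - b\<bar> / c"
    using assms \<open>c \<le> a\<close> \<open>c \<le> b\<close> by (intro scaled_div_mult_le) auto
  also have "\<dots> \<le> \<bar>y - w\<bar> / c"
    using \<open>\<bar>a - b\<bar> \<le> \<bar>y - w\<bar>\<close> assms by (simp add: divide_right_mono)
  finally show ?thesis .
qed

lemma sir_lyapunov_slope_nonpos:
  assumes "0 < c" "0 \<le> \<beta>" "c * \<beta> \<le> \<gamma>" "0 \<le> I"
  shows "(psi' c S, 1) \<bullet> sir_f \<gamma> (S, I) \<beta> \<le> 0"
proof (cases "S \<le> c")
  case True
  then have "\<beta> * S \<le> \<gamma>"
    using assms mult_left_mono[of S c \<beta>] by (simp add: mult.commute)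
  then have "(\<beta> * S - \<gamma>) * I \<le> 0"
    using assms(4) by (simp add: mult_nonpos_nonneg)
  then show ?thesis
    using True assms(1) by (simp add: psi'_def max_def sir_f_def algebra_simps)
next
  case False
  then have "(psi' c S, 1) \<bullet> sir_f \<gamma> (S, I) \<beta> = (c * \<beta> - \<gamma>) * I"
    using assms(1) by (simp add: psi'_eq sir_f_def field_simps)
  then show ?thesis
    using assms by (simp add: mult_nonpos_nonneg)
qed

section \<open>Admissible trajectories\<close>

locale sir_trajectory =
  fixes \<gamma> bmin bmax t0 T :: real and \<beta> :: "real \<Rightarrow> real" and x :: "real \<Rightarrow> real \<times> real"
  assumes gamma_pos: "\<gamma> > 0" and bmin_pos: "0 < bmin"
    and admissible: "admissible_input bmin bmax t0 \<beta>"
    and solution: "sir_solution \<gamma> \<beta> t0 T x"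
begin

abbreviation velocity :: "real \<Rightarrow> real \<times> real" where
  "velocity \<tau> \<equiv> sir_f \<gamma> (x \<tau>) (\<beta> \<tau>)"

lemma input_bounds: "t0 \<le> \<tau> \<Longrightarrow> 0 < \<beta> \<tau> \<and> \<beta> \<tau> \<le> bmax"
  using admissible bmin_pos by (force simp: admissible_input_def)

lemma bmax_pos: "0 < bmax"
  using input_bounds[of t0] by simp

lemma has_integral_from_t0: "t \<in> {t0..T} \<Longrightarrow> (velocity has_integral x t - x t0) {t0..t}"
  using solution by (simp add: sir_solution_def)

lemma has_integral_velocity:
  assumes "t0 \<le> a" "a \<le> b" "b \<le> T"
  shows "(velocity has_integral x b - x a) {a..b}"
proof -
  have "velocity integrable_on {t0..b}"
    using has_integral_from_t0[of b] assms by auto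
  then have "velocity integrable_on {a..b}"
    by (rule integrable_subinterval_real) (use assms in auto)
  then obtain j where j: "(velocity has_integral j) {a..b}"
    by blast
  have "(velocity has_integral (x a - x t0) + j) {t0..b}"
    using has_integral_combine[OF _ _ has_integral_from_t0[of a] j] assms by auto
  moreover have "(velocity has_integral x b - x t0) {t0..b}"
    using has_integral_from_t0[of b] assms by auto
  ultimately have "(x a - x t0) + j = x b - x t0"
    by (rule has_integral_unique)
  then have "j = x b - x a"
    by (simp add: eq_diff_eq add.commute)
  with j show ?thesis
    by simp
qed

lemma continuous_on_trajectory: "continuous_on {t0..T} x"
proof (cases "t0 \<le> T")
  case True
  have "velocity integrable_on {t0..T}"
    using has_integral_from_t0[of T] True by (auto intro: has_integral_integrable)
  then have "continuous_on {t0..T} (\<lambda>t. x t0 + integral {t0..t} velocity)"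
    by (intro continuous_intros indefinite_integral_continuous_1)
  moreover have "x t0 + integral {t0..t} velocity = x t" if "t \<in> {t0..T}" for t
    using integral_unique[OF has_integral_from_t0[OF that]] by simp
  ultimately show ?thesis
    by (rule continuous_on_eq) simp
qed simp

lemma trajectory_bounded: obtains B where "\<And>\<tau>. \<tau> \<in> {t0..T} \<Longrightarrow> norm (x \<tau>) \<le> B"
proof -
  have "bounded (x ` {t0..T})"
    by (intro compact_imp_bounded compact_continuous_image continuous_on_trajectory) simp
  then obtain B where "\<forall>y\<in>x ` {t0..T}. norm y \<le> B"
    unfolding bounded_iff by blast
  then show ?thesis
    using that by blast
qed

context
  fixes B :: real
  assumes norm_le_B: "\<And>\<tau>. \<tau> \<in> {t0..T} \<Longrightarrow> norm (x \<tau>) \<le> B"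
begin

abbreviation speed_bound :: real where
  "speed_bound \<equiv> 2 * bmax * B\<^sup>2 + \<gamma> * B"

lemma B_nonneg: "t0 \<le> T \<Longrightarrow> 0 \<le> B"
  using norm_le_B[of t0] by (metis atLeastAtMost_iff norm_ge_zero order.trans order_refl)

lemma abs_incidence_le:
  assumes "\<tau> \<in> {t0..T}"
  shows "\<bar>\<beta> \<tau> * fst (x \<tau>) * snd (x \<tau>)\<bar> \<le> bmax * B\<^sup>2"
proof -
  have "\<bar>\<beta> \<tau> * fst (x \<tau>) * snd (x \<tau>)\<bar> = \<bar>\<beta> \<tau>\<bar> * \<bar>fst (x \<tau>)\<bar> * \<bar>snd (x \<tau>)\<bar>"
    by (simp add: abs_mult)
  also have "\<dots> \<le> bmax * B * B"
    using input_bounds[of \<tau>] assms norm_le_B[OF assms] abs_fst_le_norm[of "x \<tau>"]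
      abs_snd_le_norm[of "x \<tau>"]
    by (intro mult_mono) auto
  finally show ?thesis
    by (simp add: power2_eq_square mult.assoc)
qed

lemma norm_velocity_le:
  assumes "\<tau> \<in> {t0..T}"
  shows "norm (velocity \<tau>) \<le> speed_bound"
proof -
  have "\<bar>\<gamma> * snd (x \<tau>)\<bar> \<le> \<gamma> * B"
    using gamma_pos norm_le_B[OF assms] abs_snd_le_norm[of "x \<tau>"] by (simp add: abs_mult)
  moreover have "norm (velocity \<tau>) \<le> norm (- \<beta> \<tau> * fst (x \<tau>) * snd (x \<tau>))
      + norm (\<beta> \<tau> * fst (x \<tau>) * snd (x \<tau>) - \<gamma> * snd (x \<tau>))"
    unfolding sir_f_def by (rule norm_Pair_le)
  moreover have "\<bar>\<beta> \<tau> * fst (x \<tau>) * snd (x \<tau>) - \<gamma> * snd (x \<tau>)\<bar>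
      \<le> \<bar>\<beta> \<tau> * fst (x \<tau>) * snd (x \<tau>)\<bar> + \<bar>\<gamma> * snd (x \<tau>)\<bar>"
    by (rule abs_triangle_ineq4)
  ultimately show ?thesis
    using abs_incidence_le[OF assms] by simp
qed

lemma speed_bound_nonneg: "t0 \<le> T \<Longrightarrow> 0 \<le> speed_bound"
  using norm_velocity_le[of t0] by (metis atLeastAtMost_iff norm_ge_zero order.trans order_refl)

lemma norm_increment_le_speed:
  assumes "t0 \<le> a" "a \<le> b" "b \<le> T"
  shows "norm (x b - x a) \<le> speed_bound * (b - a)"
  by (rule norm_increment_le[OF _ has_integral_velocity]) (use assms norm_velocity_le in auto)


lemma neg_ln_infected_slope_le:
  assumes interval: "t0 \<le> s" "s \<le> u" "u \<le> T" and "0 < m"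
    and m_le: "\<And>\<tau>. \<tau> \<in> {s..u} \<Longrightarrow> m \<le> snd (x \<tau>)" and "\<tau> \<in> {s..u}"
  shows "(0, - 1 / snd (x s)) \<bullet> velocity \<tau> \<le> (1 + speed_bound * (u - s) / m) * (\<gamma> + bmax * B)"
proof -
  define I where "I \<tau> = snd (x \<tau>)" for \<tau>
  have "0 < I s" "0 < I \<tau>"
    using m_le[of s] m_le[OF \<open>\<tau> \<in> {s..u}\<close>] interval \<open>0 < m\<close> by (simp_all add: I_def)
  have "0 \<le> speed_bound * (u - s)"
    using speed_bound_nonneg interval by simp
  have "I \<tau> - I s \<le> speed_bound * (u - s)"
    using abs_snd_le_norm[of "x \<tau> - x s"] norm_increment_le_speed[of s \<tau>] \<open>\<tau> \<in> {s..u}\<close> interval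
      mult_left_mono[of "\<tau> - s" "u - s" speed_bound] speed_bound_nonneg
    by (simp add: I_def)
  have "I \<tau> / I s = 1 + (I \<tau> - I s) / I s"
    using \<open>0 < I s\<close> by (simp add: field_simps)
  also have "\<dots> \<le> 1 + speed_bound * (u - s) / I s"
    using \<open>I \<tau> - I s \<le> speed_bound * (u - s)\<close> \<open>0 < I s\<close> by (simp add: divide_right_mono)
  also have "\<dots> \<le> 1 + speed_bound * (u - s) / m"
    using \<open>0 \<le> speed_bound * (u - s)\<close> m_le[of s] \<open>0 < m\<close> interval
    by (simp add: divide_left_mono I_def)
  finally have ratio: "I \<tau> / I s \<le> 1 + speed_bound * (u - s) / m" .
  have "\<bar>\<beta> \<tau> * fst (x \<tau>)\<bar> \<le> bmax * B"
    using input_bounds[of \<tau>] \<open>\<tau> \<in> {s..u}\<close> interval norm_le_B[of \<tau>] abs_fst_le_norm[of "x \<tau>"]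
    by (auto simp: abs_mult intro!: mult_mono)
  then have "\<gamma> - \<beta> \<tau> * fst (x \<tau>) \<le> \<gamma> + bmax * B"
    by simp
  moreover have "0 \<le> \<gamma> + bmax * B"
    using gamma_pos bmax_pos B_nonneg interval by simp
  ultimately have "I \<tau> / I s * (\<gamma> - \<beta> \<tau> * fst (x \<tau>)) \<le> (1 + speed_bound * (u - s) / m) * (\<gamma> + bmax * B)"
    using ratio \<open>0 < I s\<close> \<open>0 < I \<tau>\<close>
    by (meson divide_nonneg_pos less_imp_le mult_left_mono mult_right_mono order.trans)
  moreover have "(0, - 1 / I s) \<bullet> velocity \<tau> = I \<tau> / I s * (\<gamma> - \<beta> \<tau> * fst (x \<tau>))"
    using \<open>0 < I s\<close> by (simp add: inner_Pair_real sir_f_def I_def field_simps)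
  ultimately show ?thesis
    by (simp add: I_def)
qed

lemma neg_ln_infected_increment_le:
  assumes interval: "t0 \<le> s" "s \<le> u" "u \<le> T" and "0 < m"
    and m_le: "\<And>\<tau>. \<tau> \<in> {s..u} \<Longrightarrow> m \<le> snd (x \<tau>)"
  defines "A \<equiv> \<gamma> + bmax * B"
  shows "- ln (snd (x u)) + ln (snd (x s))
           \<le> A * (u - s) + (A * speed_bound / m + 1 / m\<^sup>2 * speed_bound\<^sup>2) * (u - s)\<^sup>2"
proof -
  define I where "I \<tau> = snd (x \<tau>)" for \<tau>
  have "- ln (I u) + ln (I s) \<le> - (I u - I s) / I s + (I u - I s)\<^sup>2 / m\<^sup>2"
    using neg_ln_diff_le[of m "I u" "I s"] m_le[of u] m_le[of s] interval \<open>0 < m\<close>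
    by (simp add: I_def)
  moreover have "(I u - I s)\<^sup>2 \<le> (norm (x u - x s))\<^sup>2"
    using power_mono[OF abs_snd_le_norm[of "x u - x s"] abs_ge_zero, of 2] by (simp add: I_def)
  then have "(I u - I s)\<^sup>2 / m\<^sup>2 \<le> 1 / m\<^sup>2 * (norm (x u - x s))\<^sup>2"
    by (simp add: divide_right_mono)
  moreover have "(0, - 1 / I s) \<bullet> (x u - x s) = - (I u - I s) / I s"
    by (simp add: inner_Pair_real I_def diff_divide_distrib)
  ultimately have taylor: "- ln (I u) + ln (I s) \<le> (0, - 1 / I s) \<bullet> (x u - x s) + 1 / m\<^sup>2 * (norm (x u - x s))\<^sup>2"
    by linarith
  have "(\<lambda>v. - ln (snd v)) (x u) - (\<lambda>v. - ln (snd v)) (x s)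
      \<le> A * (u - s) + (A * speed_bound / m + 1 / m\<^sup>2 * speed_bound\<^sup>2) * (u - s)\<^sup>2"
  proof (rule increment_le_of_linear_bound[OF \<open>s \<le> u\<close> has_integral_velocity])
    show "norm (velocity \<tau>) \<le> speed_bound" if "\<tau> \<in> {s..u}" for \<tau>
      using that interval by (intro norm_velocity_le) auto
    show "(0, - 1 / snd (x s)) \<bullet> velocity \<tau> \<le> A + A * speed_bound / m * (u - s)" if "\<tau> \<in> {s..u}" for \<tau>
      using neg_ln_infected_slope_le[OF interval \<open>0 < m\<close> m_le that] by (simp add: A_def algebra_simps)
  qed (use taylor interval in \<open>auto simp: I_def\<close>)
  then show ?thesis
    by simp
qed

lemma infected_exp_lower_bound:
  assumes "t0 \<le> t" "t \<le> T" and pos: "\<And>\<tau>. \<tau> \<in> {t0..t} \<Longrightarrow> 0 < snd (x \<tau>)"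
  shows "snd (x t0) * exp (- (\<gamma> + bmax * B) * (t - t0)) \<le> snd (x t)"
proof -
  define A where "A = \<gamma> + bmax * B"
  have cont: "continuous_on {t0..t} (\<lambda>\<tau>. snd (x \<tau>))"
    using continuous_on_subset[OF continuous_on_trajectory] assms by (intro continuous_on_snd) auto
  obtain \<tau>\<^sub>m where "\<tau>\<^sub>m \<in> {t0..t}" and min: "\<And>\<tau>. \<tau> \<in> {t0..t} \<Longrightarrow> snd (x \<tau>\<^sub>m) \<le> snd (x \<tau>)"
    using continuous_attains_inf[OF compact_Icc _ cont] assms by auto
  define m where "m = snd (x \<tau>\<^sub>m)"
  have "0 < m"
    using pos \<open>\<tau>\<^sub>m \<in> {t0..t}\<close> by (simp add: m_def)
  have "(\<lambda>\<tau>. - ln (snd (x \<tau>))) t - (\<lambda>\<tau>. - ln (snd (x \<tau>))) t0 \<le> A * (t - t0)"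
  proof (rule diff_le_of_local_quadratic_bound[OF \<open>t0 \<le> t\<close>])
    fix s u assume "t0 \<le> s" "s \<le> u" "u \<le> t"
    then show "(\<lambda>\<tau>. - ln (snd (x \<tau>))) u - (\<lambda>\<tau>. - ln (snd (x \<tau>))) s
        \<le> A * (u - s) + (A * speed_bound / m + 1 / m\<^sup>2 * speed_bound\<^sup>2) * (u - s)\<^sup>2"
      using neg_ln_infected_increment_le[of s u m] min \<open>0 < m\<close> \<open>t \<le> T\<close>
      by (simp add: A_def m_def)
  qed
  then have "ln (snd (x t0)) + (- A * (t - t0)) \<le> ln (snd (x t))"
    by simp
  then have "exp (ln (snd (x t0)) + (- A * (t - t0))) \<le> snd (x t)"
    using pos[of t] \<open>t0 \<le> t\<close> by (metis atLeastAtMost_iff exp_le_cancel_iff exp_ln order_refl)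
  then show ?thesis
    using pos[of t0] \<open>t0 \<le> t\<close> by (simp add: exp_add A_def)
qed

lemma lyapunov_slope_le:
  assumes interval: "t0 \<le> s" "s \<le> u" "u \<le> T" and "\<tau> \<in> {s..u}" and "0 \<le> snd (x \<tau>)"
  defines "c \<equiv> \<gamma> / bmax"
  shows "(psi' c (fst (x s)), 1) \<bullet> velocity \<tau> \<le> speed_bound / c * bmax * B\<^sup>2 * (u - s)"
proof -
  define S I where "S = fst (x \<tau>)" and "I = snd (x \<tau>)"
  have "0 < c"
    using gamma_pos bmax_pos by (simp add: c_def)
  have "\<tau> \<in> {t0..T}"
    using \<open>\<tau> \<in> {s..u}\<close> interval by auto
  have "(psi' c (fst (x s)), 1) \<bullet> velocity \<tau> = (psi' c S, 1) \<bullet> sir_f \<gamma> (S, I) (\<beta> \<tau>)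
      + (psi' c (fst (x s)) - psi' c S) * (- \<beta> \<tau> * S * I)"
    by (simp add: inner_Pair_real sir_f_def S_def I_def algebra_simps)
  moreover have "c * \<beta> \<tau> \<le> \<gamma>"
    using input_bounds[of \<tau>] \<open>\<tau> \<in> {t0..T}\<close> \<open>0 < c\<close> bmax_pos mult_left_mono[of "\<beta> \<tau>" bmax c]
    by (simp add: c_def)
  then have "(psi' c S, 1) \<bullet> sir_f \<gamma> (S, I) (\<beta> \<tau>) \<le> 0"
    using input_bounds[of \<tau>] \<open>\<tau> \<in> {t0..T}\<close> \<open>0 < c\<close> \<open>0 \<le> snd (x \<tau>)\<close>
    by (intro sir_lyapunov_slope_nonpos) (auto simp: I_def)
  moreover have "\<bar>fst (x s) - S\<bar> \<le> speed_bound * (u - s)"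
  proof -
    have "\<bar>fst (x s) - S\<bar> \<le> norm (x \<tau> - x s)"
      using abs_fst_le_norm[of "x \<tau> - x s"] by (simp add: S_def abs_minus_commute)
    also have "\<dots> \<le> speed_bound * (\<tau> - s)"
      using \<open>\<tau> \<in> {s..u}\<close> interval by (intro norm_increment_le_speed) auto
    also have "\<dots> \<le> speed_bound * (u - s)"
      using \<open>\<tau> \<in> {s..u}\<close> interval speed_bound_nonneg by (intro mult_left_mono) auto
    finally show ?thesis .
  qed
  then have "\<bar>psi' c (fst (x s)) - psi' c S\<bar> \<le> speed_bound * (u - s) / c"
    using psi'_lipschitz[OF \<open>0 < c\<close>, of "fst (x s)" S] \<open>0 < c\<close>
    by (meson divide_right_mono less_imp_le order_trans)
  then have "\<bar>psi' c (fst (x s)) - psi' c S\<bar> * \<bar>\<beta> \<tau> * S * I\<bar> \<le> speed_bound * (u - s) / c * (bmax * B\<^sup>2)"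
    using abs_incidence_le[OF \<open>\<tau> \<in> {t0..T}\<close>] by (intro mult_mono) (auto simp: S_def I_def)
  then have "(psi' c (fst (x s)) - psi' c S) * (- \<beta> \<tau> * S * I) \<le> speed_bound * (u - s) / c * (bmax * B\<^sup>2)"
    using abs_ge_self[of "(psi' c (fst (x s)) - psi' c S) * (- \<beta> \<tau> * S * I)"] by (simp add: abs_mult)
  ultimately show ?thesis
    by (simp add: field_simps)
qed

lemma lyapunov_increment_le:
  assumes interval: "t0 \<le> s" "s \<le> u" "u \<le> T"
    and nonneg: "\<And>\<tau>. \<tau> \<in> {s..u} \<Longrightarrow> 0 \<le> snd (x \<tau>)"
  defines "c \<equiv> \<gamma> / bmax"
  shows "sir_lyapunov c (x u) - sir_lyapunov c (x s)
           \<le> (speed_bound / c * bmax * B\<^sup>2 + 1 / c * speed_bound\<^sup>2) * (u - s)\<^sup>2"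
proof -
  have "0 < c"
    using gamma_pos bmax_pos by (simp add: c_def)
  have "(fst (x u) - fst (x s))\<^sup>2 \<le> (norm (x u - x s))\<^sup>2"
    using power_mono[OF abs_fst_le_norm[of "x u - x s"] abs_ge_zero, of 2] by simp
  then have "(fst (x u) - fst (x s))\<^sup>2 / c \<le> 1 / c * (norm (x u - x s))\<^sup>2"
    using \<open>0 < c\<close> by (simp add: divide_right_mono)
  then have taylor: "sir_lyapunov c (x u) - sir_lyapunov c (x s)
      \<le> (psi' c (fst (x s)), 1) \<bullet> (x u - x s) + 1 / c * (norm (x u - x s))\<^sup>2"
    using psi_taylor[OF \<open>0 < c\<close>, of "fst (x u)" "fst (x s)"]
    by (simp add: sir_lyapunov_def inner_Pair_real)
  have slope: "(psi' c (fst (x s)), 1) \<bullet> velocity \<tau> \<le> 0 + speed_bound / c * bmax * B\<^sup>2 * (u - s)"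
    if "\<tau> \<in> {s..u}" for \<tau>
    using lyapunov_slope_le[OF interval that nonneg[OF that]] by (simp add: c_def)
  show ?thesis
    using increment_le_of_linear_bound[OF \<open>s \<le> u\<close> has_integral_velocity _ taylor slope] interval
      norm_velocity_le \<open>0 < c\<close>
    by simp
qed

end

lemma infected_pos:
  assumes "0 < snd (x t0)" and "t \<in> {t0..T}"
  shows "0 < snd (x t)"
proof -
  obtain B where B: "\<And>\<tau>. \<tau> \<in> {t0..T} \<Longrightarrow> norm (x \<tau>) \<le> B"
    using trajectory_bounded by blast
  define A where "A = \<gamma> + bmax * B"
  have "0 \<le> B"
    using B_nonneg[OF B] assms(2) by simp
  then have "0 \<le> A"
    using gamma_pos bmax_pos by (simp add: A_def)
  define \<kappa> where "\<kappa> = snd (x t0) * exp (- A * (T - t0))"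
  show ?thesis
  proof (rule pos_of_lower_bound_while_pos[OF continuous_on_snd[OF continuous_on_trajectory] assms(1) _ _ assms(2)])
    show "0 < \<kappa>"
      using assms(1) by (simp add: \<kappa>_def)
    fix \<tau> assume "\<tau> \<in> {t0..T}" and pos: "\<And>\<sigma>. \<sigma> \<in> {t0..\<tau>} \<Longrightarrow> 0 < snd (x \<sigma>)"
    have "- A * (T - t0) \<le> - A * (\<tau> - t0)"
      using \<open>\<tau> \<in> {t0..T}\<close> \<open>0 \<le> A\<close> mult_left_mono[of "\<tau> - t0" "T - t0" A] by simp
    then have "\<kappa> \<le> snd (x t0) * exp (- A * (\<tau> - t0))"
      using mult_left_mono[of "exp (- A * (T - t0))" "exp (- A * (\<tau> - t0))" "snd (x t0)"] assms(1)
      by (simp add: \<kappa>_def)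
    also have "\<dots> \<le> snd (x \<tau>)"
      using infected_exp_lower_bound[OF B _ _ pos] \<open>\<tau> \<in> {t0..T}\<close> by (simp add: A_def)
    finally show "\<kappa> \<le> snd (x \<tau>)" .
  qed
qed

lemma sir_lyapunov_antimono:
  assumes "0 < snd (x t0)" and "t \<in> {t0..T}"
  shows "sir_lyapunov (\<gamma> / bmax) (x t) \<le> sir_lyapunov (\<gamma> / bmax) (x t0)"
proof -
  obtain B where B: "\<And>\<tau>. \<tau> \<in> {t0..T} \<Longrightarrow> norm (x \<tau>) \<le> B"
    using trajectory_bounded by blast
  have "(\<lambda>\<tau>. sir_lyapunov (\<gamma> / bmax) (x \<tau>)) t - (\<lambda>\<tau>. sir_lyapunov (\<gamma> / bmax) (x \<tau>)) t0 \<le> 0 * (t - t0)"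
  proof (rule diff_le_of_local_quadratic_bound)
    fix s u assume "t0 \<le> s" "s \<le> u" "u \<le> t"
    moreover have "0 \<le> snd (x \<tau>)" if "\<tau> \<in> {s..u}" for \<tau>
      using infected_pos[OF assms(1), of \<tau>] that \<open>t0 \<le> s\<close> \<open>u \<le> t\<close> assms(2) by simp
    ultimately show "(\<lambda>\<tau>. sir_lyapunov (\<gamma> / bmax) (x \<tau>)) u - (\<lambda>\<tau>. sir_lyapunov (\<gamma> / bmax) (x \<tau>)) s
        \<le> 0 * (u - s) + (speed_bound B / (\<gamma> / bmax) * bmax * B\<^sup>2 + 1 / (\<gamma> / bmax) * (speed_bound B)\<^sup>2) * (u - s)\<^sup>2"
      using lyapunov_increment_le[OF B, of s u] assms(2) by simp
  qed (use assms in auto)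
  then show ?thesis
    by simp
qed

end

section \<open>Scalar flows with negative speed\<close>

text \<open>For \<open>S' = g S\<close> with \<open>g < 0\<close> on \<open>[c, R)\<close>, \<open>flow_time g c S \<le> 0\<close> is the time at which the
  solution arriving at \<open>c\<close> at time \<open>0\<close> passes through \<open>S\<close>; \<open>flow_inverse\<close> inverts it and
  thus is that solution.\<close>

definition flow_time :: "(real \<Rightarrow> real) \<Rightarrow> real \<Rightarrow> real \<Rightarrow> real" where
  "flow_time g c S = integral {c..S} (\<lambda>s. 1 / g s)"

definition flow_inverse :: "(real \<Rightarrow> real) \<Rightarrow> real \<Rightarrow> real \<Rightarrow> real \<Rightarrow> real" where
  "flow_inverse g c R u = (THE S. c \<le> S \<and> S < R \<and> flow_time g c S = u)"

locale negative_field =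
  fixes c R :: real and g :: "real \<Rightarrow> real"
  assumes c_less_R: "c < R"
    and continuous_g: "continuous_on {c..<R} g"
    and g_neg: "\<And>S. S \<in> {c..<R} \<Longrightarrow> g S < 0"
begin

abbreviation G :: "real \<Rightarrow> real" where
  "G \<equiv> flow_time g c"

abbreviation \<sigma> :: "real \<Rightarrow> real" where
  "\<sigma> \<equiv> flow_inverse g c R"

lemma continuous_on_inverse_g: "S1 < R \<Longrightarrow> continuous_on {c..S1} (\<lambda>s. 1 / g s)"
proof (intro continuous_on_divide continuous_on_const)
  assume "S1 < R"
  show "continuous_on {c..S1} g"
    by (rule continuous_on_subset[OF continuous_g]) (use \<open>S1 < R\<close> in auto)
  show "\<forall>s\<in>{c..S1}. g s \<noteq> 0"
    using g_neg \<open>S1 < R\<close> by (metis atLeastAtMost_iff atLeastLessThan_iff le_less_trans less_irrefl)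
qed

lemma flow_time_c [simp]: "G c = 0"
  by (simp add: flow_time_def)

lemma continuous_on_flow_time: "S1 < R \<Longrightarrow> continuous_on {c..S1} G"
  unfolding flow_time_def
  by (rule indefinite_integral_continuous_1[OF integrable_continuous_real[OF continuous_on_inverse_g]])

lemma flow_time_has_derivative:
  assumes "c < S" "S < R"
  shows "(G has_real_derivative 1 / g S) (at S)"
proof -
  define S' where "S' = (S + R) / 2"
  have "S < S'" "S' < R"
    using assms by (auto simp: S'_def)
  have "(G has_real_derivative 1 / g S) (at S within {c..S'})"
    unfolding flow_time_def
    by (rule integral_has_real_derivative[OF continuous_on_inverse_g[OF \<open>S' < R\<close>]])
      (use assms \<open>S < S'\<close> in auto)
  moreover have "at S within {c..S'} = at S"
    by (rule at_within_interior) (use assms \<open>S < S'\<close> in auto)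
  ultimately show ?thesis
    by simp
qed

lemma flow_time_strict_antimono:
  assumes "c \<le> a" "a < b" "b < R"
  shows "G b < G a"
proof (rule DERIV_neg_imp_decreasing_open[OF \<open>a < b\<close>])
  fix S assume "a < S" "S < b"
  then show "\<exists>y. DERIV G S :> y \<and> y < 0"
    using assms flow_time_has_derivative g_neg[of S] by (intro exI[of _ "1 / g S"]) auto
next
  show "continuous_on {a..b} G"
    by (rule continuous_on_subset[OF continuous_on_flow_time[OF \<open>b < R\<close>]]) (use assms in auto)
qed

lemma flow_time_nonpos: "c \<le> S \<Longrightarrow> S < R \<Longrightarrow> G S \<le> 0"
  using flow_time_strict_antimono[of c S] by (cases "S = c") auto

lemma flow_time_neg: "c < S \<Longrightarrow> S < R \<Longrightarrow> G S < 0"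
  using flow_time_strict_antimono[of c S] by simp

lemma flow_time_inj: "c \<le> a \<Longrightarrow> a < R \<Longrightarrow> c \<le> b \<Longrightarrow> b < R \<Longrightarrow> G a = G b \<Longrightarrow> a = b"
  using flow_time_strict_antimono[of a b] flow_time_strict_antimono[of b a]
  by (cases a b rule: linorder_cases) auto

lemma flow_inverse_flow_time: "c \<le> S \<Longrightarrow> S < R \<Longrightarrow> \<sigma> (G S) = S"
  unfolding flow_inverse_def by (rule the_equality) (auto intro: flow_time_inj)

lemma flow_time_image:
  assumes "c \<le> S1" "S1 < R"
  shows "G ` {c..S1} = {G S1..0}"
proof
  show "G ` {c..S1} \<subseteq> {G S1..0}"
    using flow_time_strict_antimono[of _ S1] flow_time_nonpos assms
    by (force simp: order_le_less)
  show "{G S1..0} \<subseteq> G ` {c..S1}"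
  proof
    fix u assume "u \<in> {G S1..0}"
    then obtain S where "c \<le> S" "S \<le> S1" "G S = u"
      using IVT2'[of G S1 u c] assms continuous_on_flow_time[OF \<open>S1 < R\<close>] by auto
    then show "u \<in> G ` {c..S1}"
      by force
  qed
qed

lemma flow_inverse_bounds:
  assumes "c \<le> S1" "S1 < R" "G S1 \<le> u" "u \<le> 0"
  shows "c \<le> \<sigma> u" "\<sigma> u \<le> S1" "G (\<sigma> u) = u"
proof -
  obtain S where "c \<le> S" "S \<le> S1" "G S = u"
    using flow_time_image[OF assms(1,2)] assms(3,4) by (metis atLeastAtMost_iff imageE)
  moreover have "\<sigma> u = S"
    using flow_inverse_flow_time[of S] calculation assms by auto
  ultimately show "c \<le> \<sigma> u" "\<sigma> u \<le> S1" "G (\<sigma> u) = u"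
    by auto
qed

lemma continuous_on_flow_inverse:
  assumes "c \<le> S1" "S1 < R"
  shows "continuous_on {G S1..0} \<sigma>"
proof -
  have "continuous_on (G ` {c..S1}) \<sigma>"
    by (rule continuous_on_inv[OF continuous_on_flow_time[OF \<open>S1 < R\<close>]])
      (use flow_inverse_flow_time assms in auto)
  then show ?thesis
    using flow_time_image[OF assms] by simp
qed

lemma flow_inverse_has_derivative:
  assumes "c \<le> S1" "S1 < R" "G S1 < u" "u < 0"
  shows "(\<sigma> has_real_derivative g (\<sigma> u)) (at u)"
proof -
  have bounds: "c \<le> \<sigma> u" "\<sigma> u \<le> S1" "G (\<sigma> u) = u"
    using flow_inverse_bounds[OF assms(1,2)] assms by auto
  then have "\<sigma> u \<noteq> c" "\<sigma> u \<noteq> S1"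
    using assms by auto
  with bounds have inside: "c < \<sigma> u" "\<sigma> u < R"
    using assms by auto
  then have "g (\<sigma> u) \<noteq> 0"
    using g_neg[of "\<sigma> u"] by auto
  have "DERIV \<sigma> u :> inverse (1 / g (\<sigma> u))"
  proof (rule DERIV_inverse_function[where f = G and a = "G S1" and b = 0])
    show "DERIV G (\<sigma> u) :> 1 / g (\<sigma> u)"
      by (rule flow_time_has_derivative[OF inside])
    show "G (\<sigma> y) = y" if "G S1 < y" "y < 0" for y
      using flow_inverse_bounds[OF assms(1,2), of y] that by auto
    show "isCont \<sigma> u"
      by (rule continuous_on_interior[OF continuous_on_flow_inverse[OF assms(1,2)]]) (use assms in auto)
  qed (use assms \<open>g (\<sigma> u) \<noteq> 0\<close> in auto)
  then show ?thesis
    using \<open>g (\<sigma> u) \<noteq> 0\<close> by simp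
qed

end

section \<open>The \<open>bmax\<close>-flow on a level set\<close>

text \<open>With \<open>c = \<gamma> / bmax\<close>, the input \<open>bmax\<close> preserves \<open>I + S - c ln S\<close>. On its level set \<open>h\<close>,
  \<open>I = level_I c h S\<close> and the \<open>S\<close>-equation becomes \<open>S' = level_speed bmax c h S\<close>.\<close>

definition level_I :: "real \<Rightarrow> real \<Rightarrow> real \<Rightarrow> real" where
  "level_I c h S = h - S + c * ln S"

definition level_speed :: "real \<Rightarrow> real \<Rightarrow> real \<Rightarrow> real \<Rightarrow> real" where
  "level_speed bmax c h S = - bmax * S * level_I c h S"

lemma level_I_has_derivative: "S > 0 \<Longrightarrow> (level_I c h has_real_derivative (- 1 + c / S)) (at S)"
  unfolding level_I_def[abs_def] by (auto intro!: derivative_eq_intros simp: field_simps)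

lemma continuous_on_level_I: "(\<And>S. S \<in> A \<Longrightarrow> S > 0) \<Longrightarrow> continuous_on A (level_I c h)"
  unfolding level_I_def[abs_def] by (intro continuous_intros) auto

lemma level_I_strict_antimono:
  assumes "c > 0" "c \<le> a" "a < b"
  shows "level_I c h b < level_I c h a"
proof (rule DERIV_neg_imp_decreasing_open[OF \<open>a < b\<close>])
  fix S assume "a < S" "S < b"
  then have "c / S < 1"
    using assms by (simp add: divide_less_eq)
  then show "\<exists>y. DERIV (level_I c h) S :> y \<and> y < 0"
    using level_I_has_derivative[of S c h] \<open>a < S\<close> assms by (intro exI[of _ "- 1 + c / S"]) auto
next
  show "continuous_on {a..b} (level_I c h)"
    by (rule continuous_on_level_I) (use assms in auto)
qed

lemma level_I_antimono: "c > 0 \<Longrightarrow> c \<le> a \<Longrightarrow> a \<le> b \<Longrightarrow> level_I c h b \<le> level_I c h a"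
  using level_I_strict_antimono[of c a b h] by (cases "a = b") auto

lemma level_I_diff_le:
  assumes "c > 0" "c \<le> s" "s \<le> R"
  shows "level_I c h s - level_I c h R \<le> R - s"
proof -
  have "c * ln s \<le> c * ln R"
    using assms by simp
  then show ?thesis
    by (simp add: level_I_def)
qed

lemma level_I_root:
  assumes "c > 0" and "level_I c h c > 0"
  obtains R where "c < R" "level_I c h R = 0"
proof -
  define q where "q = h + c * ln (2 * c)"
  define S1 where "S1 = 2 * \<bar>q\<bar> + 2 * c"
  have "c < S1"
    unfolding S1_def using assms(1) abs_ge_zero[of q] by linarith
  text \<open>\<open>S1\<close> is large enough for \<open>c ln S1 \<le> c ln (2c) + S1/2 - c\<close> to make \<open>level_I\<close> negative.\<close>
  have "ln (S1 / (2 * c)) \<le> S1 / (2 * c) - 1"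
    using ln_le_minus_one[of "S1 / (2 * c)"] \<open>c < S1\<close> assms(1) by simp
  then have "c * (ln S1 - ln (2 * c)) \<le> c * (S1 / (2 * c) - 1)"
    using \<open>c < S1\<close> assms(1) by (simp add: ln_div mult_left_mono)
  moreover have "c * (S1 / (2 * c) - 1) = S1 / 2 - c"
    using assms(1) by (simp add: field_simps)
  ultimately have "c * ln S1 \<le> c * ln (2 * c) + S1 / 2 - c"
    by (simp add: algebra_simps)
  then have "level_I c h S1 \<le> q - c - S1 / 2"
    by (simp add: level_I_def q_def)
  also have "\<dots> \<le> 0"
    using assms(1) abs_ge_self[of q] by (simp add: S1_def)
  finally have "level_I c h S1 \<le> 0" .
  then obtain R where "c \<le> R" "R \<le> S1" "level_I c h R = 0"
    using IVT2'[of "level_I c h" S1 0 c] assms \<open>c < S1\<close> continuous_on_level_I[of "{c..S1}" c h]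
    by force
  moreover have "R \<noteq> c"
    using calculation assms by auto
  ultimately show ?thesis
    using that[of R] by simp
qed

lemma sir_lyapunov_level_I: "c \<le> S \<Longrightarrow> sir_lyapunov c (S, level_I c h S) = level_I c h c"
  by (simp add: sir_lyapunov_def psi_eq level_I_def)

locale sir_level_flow =
  fixes bmax c h R :: real
  assumes c_pos: "0 < c" and bmax_pos: "0 < bmax"
    and c_less_R: "c < R" and level_I_R: "level_I c h R = 0"
begin

lemma level_I_pos: "c \<le> S \<Longrightarrow> S < R \<Longrightarrow> 0 < level_I c h S"
  using level_I_strict_antimono[OF c_pos, of S R h] level_I_R by simp

sublocale negative_field c R "level_speed bmax c h"
proof
  show "continuous_on {c..<R} (level_speed bmax c h)"
    unfolding level_speed_def[abs_def]
    by (intro continuous_intros continuous_on_level_I) (use c_pos in auto)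
  show "level_speed bmax c h S < 0" if "S \<in> {c..<R}" for S
    using level_I_pos[of S] c_pos bmax_pos that by (simp add: level_speed_def)
qed (rule c_less_R)

abbreviation curve :: "real \<Rightarrow> real \<times> real" where
  "curve u \<equiv> (\<sigma> u, level_I c h (\<sigma> u))"

lemma below_root:
  assumes "c \<le> S" "0 < level_I c h S"
  shows "S < R"
proof (rule ccontr)
  assume "\<not> S < R"
  then have "level_I c h S \<le> level_I c h R"
    using level_I_antimono[OF c_pos, of R S h] c_less_R by simp
  then show False
    using assms level_I_R by simp
qed

lemma inverse_level_speed_le:
  assumes "c \<le> s" "s < R"
  shows "1 / level_speed bmax c h s \<le> - 1 / (bmax * R * (R - s))"
proof -
  have "0 < level_I c h s" "level_I c h s \<le> R - s"
    using assms level_I_pos level_I_diff_le[OF c_pos, of s R h] level_I_R by auto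
  then have "bmax * s * level_I c h s \<le> bmax * R * (R - s)"
    using bmax_pos assms c_pos by (intro mult_mono) auto
  moreover have "0 < bmax * s * level_I c h s"
    using bmax_pos assms c_pos \<open>0 < level_I c h s\<close> by simp
  ultimately have "1 / (bmax * R * (R - s)) \<le> 1 / (bmax * s * level_I c h s)"
    by (intro divide_left_mono) auto
  then show ?thesis
    by (simp add: level_speed_def)
qed

text \<open>Since the speed vanishes at most linearly at the root \<open>R\<close> (\<open>inverse_level_speed_le\<close>), the
  flow time diverges logarithmically as \<open>S \<rightarrow> R\<close>; hence the flow exists for all negative times.\<close>

lemma flow_time_unbounded:
  assumes "u \<le> 0"
  obtains S1 where "c \<le> S1" "S1 < R" "G S1 \<le> u"
proof -
  define E where "E S = (ln (R - S) - ln (R - c)) / (bmax * R)" for S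
  define S1 where "S1 = R - (R - c) * exp (u * bmax * R)"
  have "0 < R"
    using c_pos c_less_R by simp
  have "u * bmax * R \<le> 0"
    using \<open>u \<le> 0\<close> bmax_pos \<open>0 < R\<close> by (simp add: mult_nonpos_nonneg)
  then have "(R - c) * exp (u * bmax * R) \<le> R - c"
    using c_less_R by (simp add: mult_left_le)
  then have "c \<le> S1"
    by (simp add: S1_def)
  have "S1 < R"
    using c_less_R by (simp add: S1_def)
  have "E S1 = u"
  proof -
    have "ln (R - S1) = ln (R - c) + u * bmax * R"
      using c_less_R by (simp add: S1_def ln_mult)
    then show ?thesis
      using bmax_pos \<open>0 < R\<close> by (simp add: E_def)
  qed
  have "((\<lambda>s. 1 / level_speed bmax c h s) has_integral G S1) {c..S1}"
    using integrable_continuous_real[OF continuous_on_inverse_g[OF \<open>S1 < R\<close>]]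
    by (simp add: flow_time_def has_integral_integral)
  moreover have "((\<lambda>s. - 1 / (bmax * R * (R - s))) has_integral (E S1 - E c)) {c..S1}"
  proof (rule fundamental_theorem_of_calculus_interior[OF \<open>c \<le> S1\<close>])
    show "continuous_on {c..S1} E"
      unfolding E_def by (intro continuous_intros) (use \<open>S1 < R\<close> bmax_pos \<open>0 < R\<close> in auto)
    fix s assume "s \<in> {c<..<S1}"
    then have "(E has_real_derivative - 1 / (bmax * R * (R - s))) (at s)"
      unfolding E_def using \<open>S1 < R\<close> bmax_pos \<open>0 < R\<close>
      by (auto intro!: derivative_eq_intros simp: field_simps)
    then show "(E has_vector_derivative - 1 / (bmax * R * (R - s))) (at s)"
      by (simp add: has_real_derivative_iff_has_vector_derivative)
  qed
  ultimately have "G S1 \<le> E S1 - E c"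
  proof (rule has_integral_le)
    show "1 / level_speed bmax c h s \<le> - 1 / (bmax * R * (R - s))" if "s \<in> {c..S1}" for s
      using inverse_level_speed_le[of s] that \<open>S1 < R\<close> by simp
  qed
  then show ?thesis
    using that \<open>c \<le> S1\<close> \<open>S1 < R\<close> \<open>E S1 = u\<close> by (simp add: E_def)
qed

lemma flow_bounds:
  assumes "t \<le> 0"
  shows "c \<le> \<sigma> t" "\<sigma> t < R" "G (\<sigma> t) = t"
proof -
  obtain S1 where "c \<le> S1" "S1 < R" "G S1 \<le> t"
    using flow_time_unbounded[OF assms] .
  then show "c \<le> \<sigma> t" "\<sigma> t < R" "G (\<sigma> t) = t"
    using flow_inverse_bounds[of S1 t] assms by auto
qed

lemma flow_0 [simp]: "\<sigma> 0 = c"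
  using flow_inverse_flow_time[of c] c_less_R by simp

lemma flow_gt_c:
  assumes "t < 0"
  shows "c < \<sigma> t"
proof -
  have "\<sigma> t \<noteq> c"
    using flow_bounds(3)[of t] assms by auto
  then show ?thesis
    using flow_bounds(1)[of t] assms by simp
qed

lemma curve_flow_time: "c \<le> S \<Longrightarrow> S < R \<Longrightarrow> curve (G S) = (S, level_I c h S)"
  using flow_inverse_flow_time by simp

lemma continuous_on_flow: "a \<le> 0 \<Longrightarrow> continuous_on {a..0} \<sigma>"
  by (rule flow_time_unbounded[of a])
    (auto intro: continuous_on_subset[OF continuous_on_flow_inverse])

lemma flow_has_derivative:
  assumes "t < 0"
  shows "(\<sigma> has_real_derivative level_speed bmax c h (\<sigma> t)) (at t)"
proof -
  obtain S1 where "c \<le> S1" "S1 < R" "G S1 \<le> t - 1"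
    using flow_time_unbounded[of "t - 1"] assms by auto
  then show ?thesis
    using flow_inverse_has_derivative[of S1 t] assms by simp
qed

lemma shifted_flow:
  assumes "a \<le> b" "b + k \<le> 0"
  shows shifted_flow_ge_c: "\<tau> \<in> {a..b} \<Longrightarrow> c \<le> \<sigma> (\<tau> + k)"
    and continuous_on_shifted_flow: "continuous_on {a..b} (\<lambda>\<tau>. \<sigma> (\<tau> + k))"
    and shifted_flow_has_derivative: "\<tau> \<in> {a<..<b} \<Longrightarrow>
      ((\<lambda>\<tau>. \<sigma> (\<tau> + k)) has_real_derivative level_speed bmax c h (\<sigma> (\<tau> + k))) (at \<tau>)"
proof -
  show "c \<le> \<sigma> (\<tau> + k)" if "\<tau> \<in> {a..b}"
    using flow_bounds(1)[of "\<tau> + k"] that assms by simp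
  show "continuous_on {a..b} (\<lambda>\<tau>. \<sigma> (\<tau> + k))"
    by (rule continuous_on_compose2[OF continuous_on_flow[of "a + k"]])
      (use assms in \<open>auto intro!: continuous_intros\<close>)
  show "((\<lambda>\<tau>. \<sigma> (\<tau> + k)) has_real_derivative level_speed bmax c h (\<sigma> (\<tau> + k))) (at \<tau>)"
    if "\<tau> \<in> {a<..<b}"
    using flow_has_derivative[of "\<tau> + k"] that assms by (simp add: DERIV_shift)
qed

lemma curve_has_integral:
  assumes "a \<le> b" "b + k \<le> 0"
  shows "((\<lambda>\<tau>. sir_f (c * bmax) (curve (\<tau> + k)) bmax) has_integral curve (b + k) - curve (a + k)) {a..b}"
proof (rule fundamental_theorem_of_calculus_interior[OF \<open>a \<le> b\<close>])
  have "continuous_on {a..b} (\<lambda>\<tau>. level_I c h (\<sigma> (\<tau> + k)))"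
    by (rule continuous_on_compose2[OF continuous_on_level_I[of "{c..}"] continuous_on_shifted_flow[OF assms]])
      (use shifted_flow_ge_c[OF assms] c_pos in \<open>force+\<close>)
  then show "continuous_on {a..b} (\<lambda>\<tau>. curve (\<tau> + k))"
    by (intro continuous_on_Pair continuous_on_shifted_flow[OF assms])
  fix \<tau> assume "\<tau> \<in> {a<..<b}"
  let ?S = "\<sigma> (\<tau> + k)"
  have "0 < ?S"
    using shifted_flow_ge_c[OF assms, of \<tau>] c_pos \<open>\<tau> \<in> {a<..<b}\<close> by simp
  have S': "((\<lambda>\<tau>. \<sigma> (\<tau> + k)) has_real_derivative level_speed bmax c h ?S) (at \<tau>)"
    by (rule shifted_flow_has_derivative[OF assms \<open>\<tau> \<in> {a<..<b}\<close>])
  have I': "((\<lambda>\<tau>. level_I c h (\<sigma> (\<tau> + k))) has_real_derivative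
      (- 1 + c / ?S) * level_speed bmax c h ?S) (at \<tau>)"
    by (rule DERIV_chain2[OF level_I_has_derivative[OF \<open>0 < ?S\<close>] S'])
  have "(level_speed bmax c h ?S, (- 1 + c / ?S) * level_speed bmax c h ?S) = sir_f (c * bmax) (curve (\<tau> + k)) bmax"
    using \<open>0 < ?S\<close> by (simp add: level_speed_def sir_f_def field_simps)
  then show "((\<lambda>\<tau>. curve (\<tau> + k)) has_vector_derivative sir_f (c * bmax) (curve (\<tau> + k)) bmax) (at \<tau>)"
    using has_vector_derivative_Pair[OF S'[unfolded has_real_derivative_iff_has_vector_derivative]
        I'[unfolded has_real_derivative_iff_has_vector_derivative]]
    by simp
qed

lemma adjoint_has_integral:
  assumes "a \<le> b" "b + k \<le> 0"
  shows "((\<lambda>\<tau>. sir_adj (c * bmax) (curve (\<tau> + k)) (1 - c / \<sigma> (\<tau> + k), 1) bmax) has_integral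
      (1 - c / \<sigma> (b + k), 1) - (1 - c / \<sigma> (a + k), 1)) {a..b}"
proof (rule fundamental_theorem_of_calculus_interior[OF \<open>a \<le> b\<close>])
  have "continuous_on {a..b} (\<lambda>\<tau>. 1 - c / \<sigma> (\<tau> + k))"
    by (intro continuous_intros continuous_on_shifted_flow[OF assms])
      (use shifted_flow_ge_c[OF assms] c_pos in fastforce)
  then show "continuous_on {a..b} (\<lambda>\<tau>. (1 - c / \<sigma> (\<tau> + k), 1::real))"
    by (intro continuous_on_Pair continuous_on_const)
  fix \<tau> assume "\<tau> \<in> {a<..<b}"
  let ?S = "\<sigma> (\<tau> + k)"
  have "0 < ?S"
    using shifted_flow_ge_c[OF assms, of \<tau>] c_pos \<open>\<tau> \<in> {a<..<b}\<close> by simp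
  have "((\<lambda>S. 1 - c / S) has_real_derivative c / ?S\<^sup>2) (at ?S)"
    using \<open>0 < ?S\<close> by (auto intro!: derivative_eq_intros simp: field_simps power2_eq_square)
  from DERIV_chain2[OF this shifted_flow_has_derivative[OF assms \<open>\<tau> \<in> {a<..<b}\<close>]]
  have "((\<lambda>\<tau>. 1 - c / \<sigma> (\<tau> + k)) has_vector_derivative c / ?S\<^sup>2 * level_speed bmax c h ?S) (at \<tau>)"
    by (simp add: has_real_derivative_iff_has_vector_derivative)
  from has_vector_derivative_Pair[OF this has_vector_derivative_const[of "1::real"]]
  have "((\<lambda>\<tau>. (1 - c / \<sigma> (\<tau> + k), 1::real)) has_vector_derivative
      (c / ?S\<^sup>2 * level_speed bmax c h ?S, 0)) (at \<tau>)" .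
  moreover have "(c / ?S\<^sup>2 * level_speed bmax c h ?S, 0)
      = sir_adj (c * bmax) (curve (\<tau> + k)) (1 - c / ?S, 1) bmax"
    using \<open>0 < ?S\<close> by (simp add: level_speed_def sir_adj_def field_simps power2_eq_square)
  ultimately show "((\<lambda>\<tau>. (1 - c / \<sigma> (\<tau> + k), 1::real)) has_vector_derivative
      sir_adj (c * bmax) (curve (\<tau> + k)) (1 - c / ?S, 1) bmax) (at \<tau>)"
    by simp
qed

end

section \<open>The MRPI set and its barrier\<close>

lemma continuous_on_sir_lyapunov:
  assumes "c > 0"
  shows "continuous_on UNIV (sir_lyapunov c)"
proof -
  have "continuous_on UNIV (\<lambda>y :: real \<times> real. snd y + (max (fst y) c - c * ln (max (fst y) c) - c + c * ln c))"
    by (intro continuous_intros) (use assms in \<open>auto simp: max_def\<close>)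
  then show ?thesis
    by (simp add: sir_lyapunov_def psi_def[abs_def])
qed

lemma snd_le_sir_lyapunov: "c > 0 \<Longrightarrow> snd y \<le> sir_lyapunov c y"
  using psi_nonneg by (simp add: sir_lyapunov_def)

lemma sir_lyapunov_eq_snd: "fst y \<le> c \<Longrightarrow> sir_lyapunov c y = snd y"
  by (simp add: sir_lyapunov_def psi_eq_0)

lemma fst_gt_of_snd_lt_sir_lyapunov: "snd y < sir_lyapunov c y \<Longrightarrow> c < fst y"
  by (rule ccontr) (simp add: sir_lyapunov_eq_snd)

lemma mem_MRPI_of_sir_lyapunov_le:
  assumes "\<gamma> > 0" "0 < bmin" "bmin \<le> bmax"
    and "0 < snd y" "sir_lyapunov (\<gamma> / bmax) y \<le> Imax"
  shows "y \<in> MRPI \<gamma> bmin bmax Imax t0"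
proof -
  have "0 < \<gamma> / bmax"
    using assms by simp
  have "snd (x t) \<le> Imax"
    if "admissible_input bmin bmax t0 \<beta>" "x t0 = y" "sir_solution \<gamma> \<beta> t0 T x" "t \<in> {t0..T}"
    for \<beta> T x t
  proof -
    interpret sir_trajectory \<gamma> bmin bmax t0 T \<beta> x
      using assms that by unfold_locales
    have "0 < snd (x t0)"
      using that(2) assms(4) by simp
    then have "sir_lyapunov (\<gamma> / bmax) (x t) \<le> sir_lyapunov (\<gamma> / bmax) (x t0)"
      using that(4) by (rule sir_lyapunov_antimono)
    then show ?thesis
      using snd_le_sir_lyapunov[OF \<open>0 < \<gamma> / bmax\<close>, of "x t"] that(2) assms(5) by simp
  qed
  moreover have "snd y \<le> Imax"
    using snd_le_sir_lyapunov[OF \<open>0 < \<gamma> / bmax\<close>, of y] assms by simp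
  ultimately show ?thesis
    by (auto simp: MRPI_def G_set_def sir_g_def)
qed

text \<open>From a point above the level \<open>Imax\<close>, the \<open>bmax\<close>-trajectory through it keeps
  \<open>I + S - c ln S\<close> constant and reaches \<open>S = c\<close> with \<open>I = sir_lyapunov c y > Imax\<close>.\<close>

lemma not_mem_MRPI_of_sir_lyapunov_gt:
  assumes "\<gamma> > 0" "0 < bmin" "bmin \<le> bmax"
    and "0 < snd y" "snd y < Imax" "Imax < sir_lyapunov (\<gamma> / bmax) y"
  shows "y \<notin> MRPI \<gamma> bmin bmax Imax t0"
proof
  assume y_in: "y \<in> MRPI \<gamma> bmin bmax Imax t0"
  define c where "c = \<gamma> / bmax"
  have "0 < bmax" "0 < c" "c * bmax = \<gamma>"
    using assms by (auto simp: c_def)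
  have "c < fst y"
    using fst_gt_of_snd_lt_sir_lyapunov[of y c] assms by (simp add: c_def)
  define h where "h = fst y + snd y - c * ln (fst y)"
  have level_y: "level_I c h (fst y) = snd y"
    by (simp add: level_I_def h_def)
  then have level_c: "level_I c h c = sir_lyapunov c y"
    using sir_lyapunov_level_I[of c "fst y" h] \<open>c < fst y\<close> by simp
  moreover have "0 < sir_lyapunov c y"
    using assms by (simp add: c_def)
  ultimately obtain R where "c < R" "level_I c h R = 0"
    using level_I_root[OF \<open>0 < c\<close>, of h] by auto
  then interpret sir_level_flow bmax c h R
    using \<open>0 < bmax\<close> \<open>0 < c\<close> by unfold_locales
  have "fst y < R"
    using below_root[of "fst y"] \<open>c < fst y\<close> level_y assms(4) by simp
  define u0 where "u0 = G (fst y)"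
  have "u0 < 0"
    using flow_time_neg \<open>c < fst y\<close> \<open>fst y < R\<close> by (simp add: u0_def)
  define X where "X t = curve (t + (u0 - t0))" for t
  have "X t0 = y"
    using curve_flow_time[of "fst y"] \<open>c < fst y\<close> \<open>fst y < R\<close> level_y
    by (simp add: X_def u0_def)
  moreover have "admissible_input bmin bmax t0 (\<lambda>_. bmax)"
    using assms by (simp add: admissible_input_def)
  moreover have "sir_solution \<gamma> (\<lambda>_. bmax) t0 (t0 - u0) X"
    unfolding sir_solution_def
  proof
    fix t assume "t \<in> {t0..t0 - u0}"
    then show "((\<lambda>s. sir_f \<gamma> (X s) bmax) has_integral X t - X t0) {t0..t}"
      using curve_has_integral[of t0 t "u0 - t0"] \<open>c * bmax = \<gamma>\<close> by (simp add: X_def)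
  qed
  ultimately have "X (t0 - u0) \<in> G_set Imax"
    using y_in \<open>u0 < 0\<close> unfolding MRPI_def by auto
  moreover have "X (t0 - u0) = (c, sir_lyapunov c y)"
    using level_c by (simp add: X_def)
  ultimately show False
    using assms by (simp add: G_set_def sir_g_def c_def)
qed

lemma not_mem_interior_MRPI:
  assumes "\<gamma> > 0" "0 < bmin" "bmin \<le> bmax"
    and "0 < snd y" "snd y < Imax" "sir_lyapunov (\<gamma> / bmax) y = Imax"
  shows "y \<notin> interior (MRPI \<gamma> bmin bmax Imax t0)"
proof
  assume "y \<in> interior (MRPI \<gamma> bmin bmax Imax t0)"
  then obtain e where "e > 0" "ball y e \<subseteq> MRPI \<gamma> bmin bmax Imax t0"
    by (auto simp: mem_interior)
  define d where "d = min (e / 2) ((Imax - snd y) / 2)"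
  have "0 < d" "d < e"
    using \<open>e > 0\<close> assms by (auto simp: d_def)
  have "d \<le> (Imax - snd y) / 2"
    unfolding d_def by (rule min.cobounded2)
  then have "snd y + d < Imax"
    using assms by simp
  define y' where "y' = (fst y, snd y + d)"
  have "dist y y' = d"
    using \<open>0 < d\<close> by (cases y) (simp add: y'_def dist_Pair_Pair dist_real_def)
  then have "y' \<in> MRPI \<gamma> bmin bmax Imax t0"
    using \<open>ball y e \<subseteq> MRPI \<gamma> bmin bmax Imax t0\<close> \<open>d < e\<close> by auto
  moreover have "y' \<notin> MRPI \<gamma> bmin bmax Imax t0"
    using \<open>0 < d\<close> \<open>snd y + d < Imax\<close> assms
    by (intro not_mem_MRPI_of_sir_lyapunov_gt) (simp_all add: y'_def sir_lyapunov_def)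
  ultimately show False
    by blast
qed

lemma frontier_MRPI_iff:
  assumes "\<gamma> > 0" "0 < bmin" "bmin \<le> bmax"
    and "0 < snd y" "snd y < Imax"
  shows "y \<in> frontier (MRPI \<gamma> bmin bmax Imax t0) \<longleftrightarrow> sir_lyapunov (\<gamma> / bmax) y = Imax"
proof
  let ?M = "MRPI \<gamma> bmin bmax Imax t0" and ?P = "sir_lyapunov (\<gamma> / bmax)"
  assume "y \<in> frontier ?M"
  have cont: "continuous_on UNIV ?P"
    using assms by (intro continuous_on_sir_lyapunov) simp
  define U where "U = {y. 0 < snd y \<and> snd y < Imax \<and> ?P y < Imax}"
  define V where "V = {y. 0 < snd y \<and> snd y < Imax \<and> Imax < ?P y}"
  have "open U"
    unfolding U_def by (intro open_Collect_conj open_Collect_less continuous_intros cont)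
  moreover have "U \<subseteq> ?M"
    unfolding U_def using mem_MRPI_of_sir_lyapunov_le[OF assms(1-3)] by force
  ultimately have "U \<subseteq> interior ?M"
    by (rule interior_maximal[rotated])
  have "open V"
    unfolding V_def by (intro open_Collect_conj open_Collect_less continuous_intros cont)
  moreover have "V \<inter> ?M = {}"
    unfolding V_def using not_mem_MRPI_of_sir_lyapunov_gt[OF assms(1-3)] by blast
  ultimately have "V \<inter> closure ?M = {}"
    using open_Int_closure_eq_empty by blast
  have "y \<notin> U" "y \<notin> V"
    using \<open>y \<in> frontier ?M\<close> \<open>U \<subseteq> interior ?M\<close> \<open>V \<inter> closure ?M = {}\<close> by (auto simp: frontier_def)
  then show "?P y = Imax"
    using assms by (auto simp: U_def V_def)
next
  assume "sir_lyapunov (\<gamma> / bmax) y = Imax"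
  then have "y \<in> MRPI \<gamma> bmin bmax Imax t0" "y \<notin> interior (MRPI \<gamma> bmin bmax Imax t0)"
    using mem_MRPI_of_sir_lyapunov_le[OF assms(1-4)] not_mem_interior_MRPI[OF assms] by simp_all
  then show "y \<in> frontier (MRPI \<gamma> bmin bmax Imax t0)"
    using closure_subset by (auto simp: frontier_def)
qed

locale sir_barrier =
  fixes \<gamma> bmin bmax Imax c h R :: real
  assumes gamma_pos: "\<gamma> > 0" and bmin_pos: "0 < bmin" and bmin_le_bmax: "bmin \<le> bmax"
    and Imax_pos: "0 < Imax"
    and c_def: "c = \<gamma> / bmax" and h_def: "h = Imax + c - c * ln c"
    and R_gt: "c < R" and R_root: "level_I c h R = 0"
begin

lemma c_pos: "0 < c"
  using gamma_pos bmin_pos bmin_le_bmax by (simp add: c_def)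

lemma c_bmax: "c * bmax = \<gamma>"
  using bmin_pos bmin_le_bmax by (simp add: c_def)

sublocale sir_level_flow bmax c h R
  using c_pos bmin_pos bmin_le_bmax R_gt R_root by unfold_locales auto

abbreviation adjoint :: "real \<Rightarrow> real \<times> real" where
  "adjoint t \<equiv> (1 - c / \<sigma> t, 1)"

lemma level_I_c: "level_I c h c = Imax"
  by (simp add: level_I_def h_def)

lemma curve_0: "curve 0 = (c, Imax)"
  by (simp add: level_I_c)

lemma sir_lyapunov_curve: "c \<le> S \<Longrightarrow> sir_lyapunov c (S, level_I c h S) = Imax"
  using sir_lyapunov_level_I level_I_c by simp

lemma curve_below_Imax: "t < 0 \<Longrightarrow> snd (curve t) < Imax"
  using level_I_strict_antimono[OF c_pos order_refl flow_gt_c, of t h] level_I_c by simp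

lemma curve_infected_pos: "t \<le> 0 \<Longrightarrow> 0 < snd (curve t)"
  using level_I_pos flow_bounds by simp

lemma inner_adjoint_sir_f: "t \<le> 0 \<Longrightarrow> adjoint t \<bullet> sir_f \<gamma> (curve t) b = (c * b - \<gamma>) * snd (curve t)"
  using flow_bounds(1)[of t] c_pos by (simp add: sir_f_def field_simps)

lemma adjoint_gap_pos: "t \<le> 0 \<Longrightarrow> 0 < snd (adjoint t) - fst (adjoint t)"
  using flow_bounds(1)[of t] c_pos by simp

lemma barrier_curve: "barrier_curve \<gamma> bmin bmax Imax 0 curve adjoint (\<lambda>_. bmax) (c, Imax)"
proof -
  have rate_nonpos: "c * b - \<gamma> \<le> 0" if "b \<le> bmax" for b
    using mult_left_mono[OF that, of c] c_pos c_bmax by simp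
  then have maximum: "(\<forall>b\<in>{bmin..bmax}. adjoint t \<bullet> sir_f \<gamma> (curve t) b \<le> 0) \<and>
      adjoint t \<bullet> sir_f \<gamma> (curve t) bmax = 0" if "t \<le> 0" for t
    using inner_adjoint_sir_f[OF that] curve_infected_pos[OF that] c_bmax
    by (auto simp: mult_nonpos_nonneg)
  have "Lfg \<gamma> (c, Imax) b = (c * b - \<gamma>) * Imax" for b
    by (simp add: Lfg_def sir_f_def algebra_simps)
  then have tangency: "(\<forall>b\<in>{bmin..bmax}. Lfg \<gamma> (c, Imax) b \<le> 0) \<and> Lfg \<gamma> (c, Imax) bmax = 0"
    using rate_nonpos Imax_pos c_bmax by (auto simp: mult_nonpos_nonneg)
  have "\<forall>s t. s \<le> t \<and> t \<le> 0 \<longrightarrow>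
      ((\<lambda>\<tau>. sir_f \<gamma> (curve \<tau>) bmax) has_integral curve t - curve s) {s..t}"
    using curve_has_integral[of _ _ 0] c_bmax by simp
  moreover have "\<forall>s t. s \<le> t \<and> t \<le> 0 \<longrightarrow>
      ((\<lambda>\<tau>. sir_adj \<gamma> (curve \<tau>) (adjoint \<tau>) bmax) has_integral adjoint t - adjoint s) {s..t}"
    using adjoint_has_integral[of _ _ 0] c_bmax by simp
  moreover have "AE t in lebesgue. t \<le> 0 \<longrightarrow>
      (\<forall>b\<in>{bmin..bmax}. adjoint t \<bullet> sir_f \<gamma> (curve t) b \<le> 0) \<and>
      adjoint t \<bullet> sir_f \<gamma> (curve t) bmax = 0"
    using maximum by (intro AE_I2) simp
  moreover have "adjoint 0 = (0, 1)"
    using c_pos by simp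
  ultimately show ?thesis
    unfolding barrier_curve_def using tangency curve_0 bmin_le_bmax
    by (simp add: G_zero_def sir_g_def)
qed

lemma curve_image_barrier: "curve ` {..<0} = barrier \<gamma> bmin bmax Imax t0 \<inter> {y. snd y > 0}"
proof
  show "curve ` {..<0} \<subseteq> barrier \<gamma> bmin bmax Imax t0 \<inter> {y. snd y > 0}"
  proof
    fix y assume "y \<in> curve ` {..<0}"
    then obtain t where "t < 0" "y = curve t"
      by auto
    then have "0 < snd y" "snd y < Imax"
      using curve_infected_pos curve_below_Imax by auto
    moreover have "sir_lyapunov (\<gamma> / bmax) y = Imax"
      using sir_lyapunov_curve[of "\<sigma> t"] flow_bounds(1)[of t] \<open>t < 0\<close> \<open>y = curve t\<close>
      by (simp add: c_def)
    ultimately have "y \<in> frontier (MRPI \<gamma> bmin bmax Imax t0)"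
      using frontier_MRPI_iff[OF gamma_pos bmin_pos bmin_le_bmax] by blast
    with \<open>0 < snd y\<close> \<open>snd y < Imax\<close> show "y \<in> barrier \<gamma> bmin bmax Imax t0 \<inter> {y. snd y > 0}"
      by (simp add: barrier_def G_minus_def sir_g_def)
  qed
  show "barrier \<gamma> bmin bmax Imax t0 \<inter> {y. snd y > 0} \<subseteq> curve ` {..<0}"
  proof
    fix y assume "y \<in> barrier \<gamma> bmin bmax Imax t0 \<inter> {y. snd y > 0}"
    then have "y \<in> frontier (MRPI \<gamma> bmin bmax Imax t0)" "0 < snd y" "snd y < Imax"
      by (simp_all add: barrier_def G_minus_def sir_g_def)
    then have "sir_lyapunov (\<gamma> / bmax) y = Imax"
      using frontier_MRPI_iff[OF gamma_pos bmin_pos bmin_le_bmax] by simp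
    then have "sir_lyapunov c y = Imax"
      by (simp add: c_def)
    have "c < fst y"
      using fst_gt_of_snd_lt_sir_lyapunov[of y c] \<open>sir_lyapunov c y = Imax\<close> \<open>snd y < Imax\<close> by simp
    then have "snd y = level_I c h (fst y)"
      using sir_lyapunov_curve[of "fst y"] \<open>sir_lyapunov c y = Imax\<close> by (simp add: sir_lyapunov_def)
    then have "fst y < R"
      using below_root[of "fst y"] \<open>c < fst y\<close> \<open>0 < snd y\<close> by simp
    have "curve (G (fst y)) = y"
      using curve_flow_time[of "fst y"] \<open>c < fst y\<close> \<open>fst y < R\<close> \<open>snd y = level_I c h (fst y)\<close>
      by (simp add: prod_eq_iff)
    moreover have "G (fst y) < 0"
      using flow_time_neg \<open>c < fst y\<close> \<open>fst y < R\<close> by simp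
    ultimately show "y \<in> curve ` {..<0}"
      by (intro image_eqI[of y curve "G (fst y)"]) auto
  qed
qed

end

theorem proposition5:
  fixes \<gamma> bmin bmax Imax t0 :: real
  assumes "\<gamma> > 0" and "0 < bmin" and "bmin \<le> bmax"
    and "0 < Imax" and "Imax \<le> 1"
    and "\<gamma> / bmax + Imax \<le> 1"
  shows "\<exists>tb x l b.
     barrier_curve \<gamma> bmin bmax Imax tb x l b (\<gamma> / bmax, Imax) \<and>
     (\<forall>t\<le>tb. snd (l t) - fst (l t) > 0 \<longrightarrow> b t = bmax) \<and>
     (\<forall>t\<le>tb. snd (l t) - fst (l t) < 0 \<longrightarrow> b t = bmin) \<and>
     (\<gamma> / bmax, Imax) \<in> G_zero Imax \<inter> Pi_set \<and>
     x ` {..<tb} = barrier \<gamma> bmin bmax Imax t0 \<inter> {y. snd y > 0} \<and>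
     (\<exists>\<epsilon>>0. \<forall>t\<in>{tb - \<epsilon><..<tb}. x t \<in> G_minus Imax)"
proof -
  define h where "h = Imax + \<gamma> / bmax - \<gamma> / bmax * ln (\<gamma> / bmax)"
  have "0 < \<gamma> / bmax"
    using assms by simp
  moreover have "level_I (\<gamma> / bmax) h (\<gamma> / bmax) = Imax"
    by (simp add: level_I_def h_def)
  ultimately obtain R where "\<gamma> / bmax < R" "level_I (\<gamma> / bmax) h R = 0"
    using level_I_root \<open>0 < Imax\<close> by auto
  then interpret sir_barrier \<gamma> bmin bmax Imax "\<gamma> / bmax" h R
    using assms by unfold_locales (simp_all add: h_def)
  have "\<gamma> / bmax \<le> 1"
    using assms(4,6) by linarith
  then have "(\<gamma> / bmax, Imax) \<in> G_zero Imax \<inter> Pi_set"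
    using assms(4-6) \<open>0 < \<gamma> / bmax\<close> by (simp add: G_zero_def sir_g_def Pi_set_def)
  moreover have "\<exists>\<epsilon>>0. \<forall>t\<in>{0 - \<epsilon><..<0}. curve t \<in> G_minus Imax"
    using curve_below_Imax by (intro exI[of _ 1]) (simp add: G_minus_def sir_g_def)
  moreover have "\<forall>t\<le>0. snd (adjoint t) - fst (adjoint t) < 0 \<longrightarrow> bmax = bmin"
    using adjoint_gap_pos by (meson order.asym)
  ultimately show ?thesis
    using barrier_curve curve_image_barrier[of t0]
    by (intro exI[of _ 0] exI[of _ curve] exI[of _ adjoint] exI[of _ "\<lambda>_. bmax"]) simp
qed

end
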